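(* Let $G$ be a $d$-regular graph ($d>1$) that has a good signing. Then the lexicographic product $G\circ\overline{K_4}$ has a good signing, i.e. there is an edge-signing $\sigma'$ of $G\circ\overline{K_4}$ such that every eigenvalue of its signed adjacency matrix has absolute value at most $2\sqrt{4d-1}$.
   Context: For an edge-signing $\sigma: E(H)\to\{-1,1\}$ of a graph $H$, the signed adjacency matrix $A^{\sigma}$ has $(i,j)$ entry $\sigma(ij)$ if $ij\in E(H)$ and $0$ otherwise. A good signing of a $D$-regular graph is a signing all of whose signed adjacency eigenvalues have absolute value at most $2\sqrt{D-1}$; $G\circ\overline{K_4}$ is $4d$-regular. $\overline{K_4}$ is the edgeless graph on four vertices. The lexicographic product $G\circ H$ has vertex set $V(G)\times V(H)$, with $(x,y)$ adjacent to $(z,t)$ iff $xz\in E(G)$, or $x=z$ and $yt\in E(H)$. *)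

theory Defs
  imports "HOL-Analysis.Analysis"
begin

definition simple_graph :: "'a set \<Rightarrow> ('a \<Rightarrow> 'a \<Rightarrow> bool) \<Rightarrow> bool" where
  "simple_graph V E \<longleftrightarrow> finite V \<and> (\<forall>x y. E x y \<longrightarrow> x \<in> V \<and> y \<in> V)
     \<and> (\<forall>x y. E x y \<longrightarrow> E y x) \<and> (\<forall>x. \<not> E x x)"

definition regular_graph :: "'a set \<Rightarrow> ('a \<Rightarrow> 'a \<Rightarrow> bool) \<Rightarrow> nat \<Rightarrow> bool" where
  "regular_graph V E D \<longleftrightarrow> simple_graph V E \<and> (\<forall>x\<in>V. card {y\<in>V. E x y} = D)"

definition signing :: "'a set \<Rightarrow> ('a \<Rightarrow> 'a \<Rightarrow> bool) \<Rightarrow> ('a \<Rightarrow> 'a \<Rightarrow> real) \<Rightarrow> bool" where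
  "signing V E \<sigma> \<longleftrightarrow> (\<forall>x y. E x y \<longrightarrow> \<sigma> x y = \<sigma> y x \<and> (\<sigma> x y = 1 \<or> \<sigma> x y = -1))"

definition signed_adj :: "('a \<Rightarrow> 'a \<Rightarrow> bool) \<Rightarrow> ('a \<Rightarrow> 'a \<Rightarrow> real) \<Rightarrow> 'a \<Rightarrow> 'a \<Rightarrow> real" where
  "signed_adj E \<sigma> i j = (if E i j then \<sigma> i j else 0)"

definition is_eigenvalue :: "'a set \<Rightarrow> ('a \<Rightarrow> 'a \<Rightarrow> real) \<Rightarrow> complex \<Rightarrow> bool" where
  "is_eigenvalue V A \<mu> \<longleftrightarrow> (\<exists>v :: 'a \<Rightarrow> complex. (\<exists>i\<in>V. v i \<noteq> 0) \<and>
     (\<forall>i\<in>V. (\<Sum>j\<in>V. complex_of_real (A i j) * v j) = \<mu> * v i))"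

definition good_signing :: "'a set \<Rightarrow> ('a \<Rightarrow> 'a \<Rightarrow> bool) \<Rightarrow> nat \<Rightarrow> ('a \<Rightarrow> 'a \<Rightarrow> real) \<Rightarrow> bool" where
  "good_signing V E D \<sigma> \<longleftrightarrow> signing V E \<sigma> \<and>
     (\<forall>\<mu>. is_eigenvalue V (signed_adj E \<sigma>) \<mu> \<longrightarrow> cmod \<mu> \<le> 2 * sqrt (real D - 1))"

definition lex_prod_edges :: "('a \<Rightarrow> 'a \<Rightarrow> bool) \<Rightarrow> ('b \<Rightarrow> 'b \<Rightarrow> bool) \<Rightarrow> ('a \<times> 'b) \<Rightarrow> ('a \<times> 'b) \<Rightarrow> bool" where
  "lex_prod_edges EG EH p q \<longleftrightarrow> EG (fst p) (fst q) \<or> (fst p = fst q \<and> EH (snd p) (snd q))"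

definition K4bar_vertices :: "nat set" where "K4bar_vertices = {0..<4}"
definition K4bar_edges :: "nat \<Rightarrow> nat \<Rightarrow> bool" where "K4bar_edges x y = False"

end

theory Submission
  imports Defs
begin

text \<open>Sign \<open>G \<circ> \<overline>K\<^sub>4\<close> by \<open>\<sigma>'((x,y),(z,t)) = \<sigma>(x,z) H(y,t)\<close>, where \<open>H\<close> is a symmetric
  \<open>4 \<times> 4\<close> Hadamard matrix. The signed adjacency matrix becomes the Kronecker product
  \<open>A\<^sub>\<sigma> \<otimes> H\<close>, and \<open>H\<^sup>2 = 4I\<close> forces its eigenvalues to be \<open>\<plusminus>2\<lambda>\<close> for eigenvalues \<open>\<lambda>\<close> of \<open>A\<^sub>\<sigma>\<close>:
  if \<open>(A \<otimes> H) v = \<mu> v\<close> and \<open>w = (I \<otimes> H) v\<close>, then \<open>(A \<otimes> I) w = \<mu> v\<close> and \<open>(A \<otimes> I) v = \<mu> w / 4\<close>,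
  so one of \<open>w \<plusminus> 2v\<close> is an eigenvector of \<open>A \<otimes> I\<close> for \<open>\<plusminus>\<mu>/2\<close>. Hence every eigenvalue has
  modulus at most \<open>2 \<cdot> 2\<surd>(d - 1) = 2\<surd>(4d - 4) \<le> 2\<surd>(4d - 1)\<close>.\<close>

definition kron :: "('a \<Rightarrow> 'a \<Rightarrow> real) \<Rightarrow> ('b \<Rightarrow> 'b \<Rightarrow> real) \<Rightarrow> 'a \<times> 'b \<Rightarrow> 'a \<times> 'b \<Rightarrow> real" where
  "kron A B p q = A (fst p) (fst q) * B (snd p) (snd q)"

text \<open>The entries are required to be \<open>\<plusminus>1\<close> and symmetric everywhere, not only on \<open>K\<close>,
  because \<^const>\<open>signing\<close> constrains every edge regardless of the vertex set.\<close>
definition symmetric_hadamard :: "'b set \<Rightarrow> ('b \<Rightarrow> 'b \<Rightarrow> real) \<Rightarrow> bool" where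
  "symmetric_hadamard K H \<longleftrightarrow>
     (\<forall>y t. H y t = H t y \<and> (H y t = 1 \<or> H y t = -1)) \<and>
     (\<forall>y\<in>K. \<forall>t\<in>K. (\<Sum>u\<in>K. H y u * H u t) = (if y = t then real (card K) else 0))"

lemma is_eigenvalue_of_swapped_pair:
  fixes A :: "'a \<Rightarrow> 'a \<Rightarrow> real" and v w :: "'a \<Rightarrow> complex" and h :: complex
  assumes "h \<noteq> 0" and "x0 \<in> V" and "v x0 \<noteq> 0"
    and Aw: "\<And>x. x \<in> V \<Longrightarrow> (\<Sum>z\<in>V. of_real (A x z) * w z) = \<mu> * v x"
    and Av: "\<And>x. x \<in> V \<Longrightarrow> (\<Sum>z\<in>V. of_real (A x z) * v z) = \<mu> / h\<^sup>2 * w x"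
  shows "is_eigenvalue V A (\<mu> / h) \<or> is_eigenvalue V A (- \<mu> / h)"
proof -
  have eigen: "is_eigenvalue V A (s * \<mu> / h)"
    if s: "s = 1 \<or> s = -1" and nz: "w x0 + s * h * v x0 \<noteq> 0" for s
    unfolding is_eigenvalue_def
  proof (intro exI[of _ "\<lambda>z. w z + s * h * v z"] conjI ballI)
    show "\<exists>i\<in>V. w i + s * h * v i \<noteq> 0"
      using \<open>x0 \<in> V\<close> nz by blast
    fix x assume "x \<in> V"
    have "(\<Sum>z\<in>V. of_real (A x z) * (w z + s * h * v z))
        = (\<Sum>z\<in>V. of_real (A x z) * w z) + s * h * (\<Sum>z\<in>V. of_real (A x z) * v z)"
      by (simp add: algebra_simps sum.distrib sum_distrib_left)
    also have "\<dots> = \<mu> * v x + s * h * (\<mu> / h\<^sup>2 * w x)"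
      using Aw Av \<open>x \<in> V\<close> by simp
    also have "\<dots> = s * \<mu> / h * (w x + s * h * v x)"
      using s \<open>h \<noteq> 0\<close> by (elim disjE) (simp_all add: field_simps power2_eq_square)
    finally show "(\<Sum>z\<in>V. of_real (A x z) * (w z + s * h * v z)) = s * \<mu> / h * (w x + s * h * v x)" .
  qed
  have "(w x0 + h * v x0) - (w x0 - h * v x0) = 2 * h * v x0"
    by simp
  then have "w x0 + 1 * h * v x0 \<noteq> 0 \<or> w x0 + (-1) * h * v x0 \<noteq> 0"
    using \<open>h \<noteq> 0\<close> \<open>v x0 \<noteq> 0\<close> by auto
  then show ?thesis
    using eigen[of 1] eigen[of "-1"] by auto
qed

lemma is_eigenvalue_kron:
  fixes A :: "'a \<Rightarrow> 'a \<Rightarrow> real" and H :: "'b \<Rightarrow> 'b \<Rightarrow> real" and h :: real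
  assumes "finite K" and "h \<noteq> 0"
    and H_square: "\<And>y t. y \<in> K \<Longrightarrow> t \<in> K \<Longrightarrow> (\<Sum>u\<in>K. H y u * H u t) = (if y = t then h\<^sup>2 else 0)"
    and "is_eigenvalue (V \<times> K) (kron A H) \<mu>"
  shows "is_eigenvalue V A (\<mu> / h) \<or> is_eigenvalue V A (- \<mu> / h)"
proof -
  obtain v where "\<exists>p\<in>V \<times> K. v p \<noteq> 0"
    and eigen: "\<And>p. p \<in> V \<times> K \<Longrightarrow> (\<Sum>q\<in>V \<times> K. of_real (kron A H p q) * v q) = \<mu> * v p"
    using \<open>is_eigenvalue (V \<times> K) (kron A H) \<mu>\<close> unfolding is_eigenvalue_def by blast
  then obtain x0 y0 where "x0 \<in> V" "y0 \<in> K" "v (x0, y0) \<noteq> 0"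
    by auto
  define w where "w z y = (\<Sum>t\<in>K. of_real (H y t) * v (z, t))" for z y
  have Aw: "(\<Sum>z\<in>V. of_real (A x z) * w z y) = \<mu> * v (x, y)" if "x \<in> V" "y \<in> K" for x y
  proof -
    have "(\<Sum>z\<in>V. of_real (A x z) * w z y) = (\<Sum>z\<in>V. \<Sum>t\<in>K. of_real (kron A H (x, y) (z, t)) * v (z, t))"
      by (simp add: w_def kron_def sum_distrib_left mult.assoc)
    also have "\<dots> = \<mu> * v (x, y)"
      using eigen[of "(x, y)"] that by (simp add: sum.cartesian_product)
    finally show ?thesis .
  qed
  have Hw: "(\<Sum>u\<in>K. of_real (H y u) * w z u) = of_real (h\<^sup>2) * v (z, y)" if "y \<in> K" for z y
  proof -
    have "(\<Sum>u\<in>K. of_real (H y u) * w z u) = (\<Sum>u\<in>K. \<Sum>t\<in>K. of_real (H y u * H u t) * v (z, t))"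
      by (simp add: w_def sum_distrib_left mult.assoc)
    also have "\<dots> = (\<Sum>t\<in>K. of_real (\<Sum>u\<in>K. H y u * H u t) * v (z, t))"
      by (subst sum.swap) (simp add: sum_distrib_right)
    also have "\<dots> = (\<Sum>t\<in>K. if t = y then of_real (h\<^sup>2) * v (z, t) else 0)"
      using that by (intro sum.cong) (auto simp: H_square)
    also have "\<dots> = of_real (h\<^sup>2) * v (z, y)"
      using \<open>finite K\<close> that by simp
    finally show ?thesis .
  qed
  have Av: "(\<Sum>z\<in>V. of_real (A x z) * v (z, y)) = \<mu> / of_real h ^ 2 * w x y" if "x \<in> V" "y \<in> K" for x y
  proof -
    have "of_real (h\<^sup>2) * (\<Sum>z\<in>V. of_real (A x z) * v (z, y))
        = (\<Sum>z\<in>V. of_real (A x z) * (\<Sum>u\<in>K. of_real (H y u) * w z u))"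
      using Hw that by (simp add: sum_distrib_left algebra_simps)
    also have "\<dots> = (\<Sum>u\<in>K. of_real (H y u) * (\<Sum>z\<in>V. of_real (A x z) * w z u))"
      by (simp add: sum_distrib_left mult.left_commute) (rule sum.swap)
    also have "\<dots> = \<mu> * w x y"
      using Aw \<open>x \<in> V\<close> by (simp add: w_def sum_distrib_left algebra_simps)
    finally show ?thesis
      using \<open>h \<noteq> 0\<close> by (simp add: field_simps)
  qed
  show ?thesis
    using is_eigenvalue_of_swapped_pair[of "of_real h" x0 V "\<lambda>z. v (z, y0)" A "\<lambda>z. w z y0" \<mu>]
      \<open>h \<noteq> 0\<close> \<open>x0 \<in> V\<close> \<open>y0 \<in> K\<close> \<open>v (x0, y0) \<noteq> 0\<close> Aw Av by simp
qed

lemma lex_prod_edges_edgeless: "lex_prod_edges E (\<lambda>_ _. False) p q \<longleftrightarrow> E (fst p) (fst q)"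
  by (simp add: lex_prod_edges_def)

lemma signed_adj_lex_prod_edgeless_kron:
  "signed_adj (lex_prod_edges E (\<lambda>_ _. False)) (kron \<sigma> H) = kron (signed_adj E \<sigma>) H"
  by (simp add: fun_eq_iff signed_adj_def kron_def lex_prod_edges_edgeless)

lemma signing_lex_prod_edgeless_kron:
  assumes "signing V E \<sigma>" and "symmetric_hadamard K H"
  shows "signing (V \<times> K) (lex_prod_edges E (\<lambda>_ _. False)) (kron \<sigma> H)"
  unfolding signing_def
proof (intro allI impI)
  fix p q :: "'a \<times> 'b"
  assume "lex_prod_edges E (\<lambda>_ _. False) p q"
  then have "\<sigma> (fst p) (fst q) = \<sigma> (fst q) (fst p)" and "\<sigma> (fst p) (fst q) = 1 \<or> \<sigma> (fst p) (fst q) = -1"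
    using \<open>signing V E \<sigma>\<close> by (auto simp: signing_def lex_prod_edges_edgeless)
  moreover have "H (snd p) (snd q) = H (snd q) (snd p)" and "H (snd p) (snd q) = 1 \<or> H (snd p) (snd q) = -1"
    using \<open>symmetric_hadamard K H\<close> by (auto simp: symmetric_hadamard_def)
  ultimately show "kron \<sigma> H p q = kron \<sigma> H q p \<and> (kron \<sigma> H p q = 1 \<or> kron \<sigma> H p q = -1)"
    by (auto simp: kron_def)
qed

lemma sqrt_mult_ramanujan_bound_le:
  fixes k D :: real
  assumes "1 \<le> k"
  shows "sqrt k * (2 * sqrt (D - 1)) \<le> 2 * sqrt (k * D - 1)"
proof -
  have "sqrt k * sqrt (D - 1) = sqrt (k * D - k)"
    by (simp add: real_sqrt_mult[symmetric] algebra_simps)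
  also have "\<dots> \<le> sqrt (k * D - 1)"
    using assms by simp
  finally show ?thesis
    by simp
qed

lemma good_signing_lex_prod_edgeless:
  assumes good: "good_signing V E D \<sigma>" and hadamard: "symmetric_hadamard K H"
    and "finite K" and "K \<noteq> {}"
  shows "good_signing (V \<times> K) (lex_prod_edges E (\<lambda>_ _. False)) (card K * D) (kron \<sigma> H)"
proof -
  define h where "h = sqrt (real (card K))"
  have "1 \<le> real (card K)"
    using \<open>finite K\<close> \<open>K \<noteq> {}\<close> by (simp add: Suc_le_eq card_gt_0_iff)
  then have "h > 0" and card_K: "real (card K) = h\<^sup>2"
    by (simp_all add: h_def)
  have eigen_bound: "cmod \<mu> \<le> 2 * sqrt (real (card K * D) - 1)"
    if "is_eigenvalue (V \<times> K) (kron (signed_adj E \<sigma>) H) \<mu>" for \<mu>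
  proof -
    have "is_eigenvalue V (signed_adj E \<sigma>) (\<mu> / h) \<or> is_eigenvalue V (signed_adj E \<sigma>) (- \<mu> / h)"
      using hadamard \<open>finite K\<close> \<open>h > 0\<close> that
      by (intro is_eigenvalue_kron) (auto simp: symmetric_hadamard_def card_K)
    then have "cmod \<mu> / h \<le> 2 * sqrt (real D - 1)"
      using good \<open>h > 0\<close> unfolding good_signing_def by (auto simp: norm_divide)
    then have "cmod \<mu> \<le> h * (2 * sqrt (real D - 1))"
      using \<open>h > 0\<close> by (simp add: field_simps)
    also have "\<dots> \<le> 2 * sqrt (real (card K * D) - 1)"
      using sqrt_mult_ramanujan_bound_le[OF \<open>1 \<le> real (card K)\<close>] by (simp add: h_def)
    finally show ?thesis .
  qed
  show ?thesis
    using good hadamard eigen_bound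
    by (simp add: good_signing_def signing_lex_prod_edgeless_kron signed_adj_lex_prod_edgeless_kron)
qed

text \<open>The Sylvester matrix \<open>H(y,t) = (-1)^popcount(y AND t)\<close> of order 4, set to \<open>1\<close>
  outside \<open>{0..3}\<close>.\<close>
definition hadamard4 :: "nat \<Rightarrow> nat \<Rightarrow> real" where
  "hadamard4 y t = (if (y, t) \<in> {(1,1), (1,3), (3,1), (2,2), (2,3), (3,2)} then -1 else 1)"

lemma K4bar_vertices_eq: "K4bar_vertices = {0, 1, 2, 3}"
  by (auto simp: K4bar_vertices_def)

lemma symmetric_hadamard4: "symmetric_hadamard K4bar_vertices hadamard4"
  by (auto simp: symmetric_hadamard_def hadamard4_def K4bar_vertices_eq)

theorem mainTheorem4:
  fixes V :: "'a set" and E :: "'a \<Rightarrow> 'a \<Rightarrow> bool" and d :: nat and \<sigma> :: "'a \<Rightarrow> 'a \<Rightarrow> real"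
  assumes "regular_graph V E d" and "d > 1" and "good_signing V E d \<sigma>"
  shows "\<exists>\<sigma>'. good_signing (V \<times> K4bar_vertices) (lex_prod_edges E K4bar_edges) (4 * d) \<sigma>'"
proof -
  have "K4bar_edges = (\<lambda>_ _. False)"
    by (simp add: fun_eq_iff K4bar_edges_def)
  moreover have "card K4bar_vertices = 4"
    by (simp add: K4bar_vertices_def)
  ultimately show ?thesis
    using good_signing_lex_prod_edgeless[OF \<open>good_signing V E d \<sigma>\<close> symmetric_hadamard4]
    by (auto simp: K4bar_vertices_def)
qed

end
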